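(* Let $\delta>0$, let $X$ be a geodesic $\delta$--hyperbolic space, and let the group $G$ act $(\kappa_0,N_0)$--acylindrically on $X$ with $\kappa_0\geqslant\delta$; put $\rho_0:=\delta/N_0$ and $c:=\frac{1}{10^6}\cdot\frac{\rho_0}{\kappa_0}$. Let $U\subset G$ be finite, let $x_0\in X$ be a point with $\frac1{|U|}\sum_{u\in U}|ux_0-x_0|\leqslant E(U)+\delta$, and let $U_1:=\{u\in U\mid |ux_0-x_0|\leqslant\kappa_0\}$. Then for all $v\in G$ with $|vx_0-x_0|\geqslant10^4\kappa_0$, $$|U_1vU_1|\geqslant c^2|U_1|^2.$$
   Context: Distance $|x-y|$; Gromov product $(p,q)_x=\frac12(|p-x|+|q-x|-|p-q|)$; $X$ is $\delta$--hyperbolic if $(p,r)_x\geqslant\min\{(p,q)_x,(q,r)_x\}-\delta$ for all $p,q,r,x$. The action is $(\kappa_0,N_0)$--acylindrical ($N_0\geqslant1$) if for all $x,y$ with $|x-y|\geqslant\kappa_0$ at most $N_0$ elements $g\in G$ satisfy $|gx-x|\leqslant100\delta$ and $|gy-y|\leqslant100\delta$. $E(U):=\inf_{x\in X}\frac1{|U|}\sum_{u\in U}|ux-x|$. $U_1vU_1:=\{uvw\mid u,w\in U_1\}$. *)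

theory Defs
  imports "HOL-Analysis.Analysis" "HOL-Algebra.Group"
begin

definition gromov_product :: "'x::metric_space \<Rightarrow> 'x \<Rightarrow> 'x \<Rightarrow> real" where
  "gromov_product p q x = (dist p x + dist q x - dist p q) / 2"

definition delta_hyperbolic :: "real \<Rightarrow> 'x::metric_space itself \<Rightarrow> bool" where
  "delta_hyperbolic \<delta> _ \<longleftrightarrow> (\<forall>p q r x::'x.
     gromov_product p r x \<ge> min (gromov_product p q x) (gromov_product q r x) - \<delta>)"

definition geodesic_space :: "'x::metric_space itself \<Rightarrow> bool" where
  "geodesic_space _ \<longleftrightarrow> (\<forall>x y::'x. \<exists>\<gamma>::real \<Rightarrow> 'x.
     \<gamma> 0 = x \<and> \<gamma> (dist x y) = y \<and>
     (\<forall>s\<in>{0..dist x y}. \<forall>t\<in>{0..dist x y}. dist (\<gamma> s) (\<gamma> t) = \<bar>s - t\<bar>))"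

definition isometric_action :: "('g, 'b) monoid_scheme \<Rightarrow> ('g \<Rightarrow> 'x::metric_space \<Rightarrow> 'x) \<Rightarrow> bool" where
  "isometric_action G act \<longleftrightarrow>
     (\<forall>x. act \<one>\<^bsub>G\<^esub> x = x) \<and>
     (\<forall>g\<in>carrier G. \<forall>h\<in>carrier G. \<forall>x. act (g \<otimes>\<^bsub>G\<^esub> h) x = act g (act h x)) \<and>
     (\<forall>g\<in>carrier G. \<forall>x y. dist (act g x) (act g y) = dist x y)"

definition acylindrical ::
  "('g, 'b) monoid_scheme \<Rightarrow> ('g \<Rightarrow> 'x::metric_space \<Rightarrow> 'x) \<Rightarrow> real \<Rightarrow> real \<Rightarrow> nat \<Rightarrow> bool" where
  "acylindrical G act \<delta> \<kappa>0 N0 \<longleftrightarrow> N0 \<ge> 1 \<and>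
     (\<forall>x y. dist x y \<ge> \<kappa>0 \<longrightarrow>
        (let S = {g \<in> carrier G. dist (act g x) x \<le> 100 * \<delta> \<and> dist (act g y) y \<le> 100 * \<delta>}
         in finite S \<and> card S \<le> N0))"

definition mean_disp :: "('g \<Rightarrow> 'x::metric_space \<Rightarrow> 'x) \<Rightarrow> 'g set \<Rightarrow> 'x \<Rightarrow> real" where
  "mean_disp act U x = (\<Sum>u\<in>U. dist (act u x) x) / real (card U)"

definition energy :: "('g \<Rightarrow> 'x::metric_space \<Rightarrow> 'x) \<Rightarrow> 'g set \<Rightarrow> real" where
  "energy act U = (INF x. mean_disp act U x)"

definition double_coset_prod :: "('g, 'b) monoid_scheme \<Rightarrow> 'g set \<Rightarrow> 'g \<Rightarrow> 'g set" where
  "double_coset_prod G U v = {u \<otimes>\<^bsub>G\<^esub> v \<otimes>\<^bsub>G\<^esub> w | u w. u \<in> U \<and> w \<in> U}"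

end

(*
  Put y = v x0.  If u v w = u' v w' with u, w, u', w' in U1, then inv u' u moves both x0 and y by
  at most 2 kappa0, since u v x0 and u' v x0 are both kappa0-close to u v w x0.  So every element
  of U1 v U1 has at most |A| representations u v w, where A is the set of elements moving x0 and y
  by at most 2 kappa0, and |U1|^2 <= |U1 v U1| |A|.

  As x0 and y are far apart, A is small.  By hyperbolicity, an element a of A maps a point p of a
  geodesic [x0, y] (away from the ends) to within 4 delta of the point of [x0, y] whose distance
  from x0 differs from that of p by at most 2 kappa0.  Record this shift, in units of delta, at two
  points p, q of [x0, y] at distance kappa0: there are at most (6 kappa0 / delta)^2 records, and
  two elements a, b with the same record satisfy |a p - b p|, |a q - b q| <= 9 delta, so inv a b
  lies in the set of at most N0 elements that acylindricity allows.  Hence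
  |A| <= 36 N0 (kappa0 / delta)^2 <= 1 / c^2.
*)
theory Submission
  imports Defs
begin

lemma gromov_product_nonneg: "0 \<le> gromov_product p q x"
  unfolding gromov_product_def using dist_triangle3[of p q x] by (simp add: dist_commute)

lemma gromov_product_le_dist: "gromov_product p q x \<le> dist q x"
  unfolding gromov_product_def using dist_triangle3[of p x q] by (simp add: dist_commute)

lemma delta_hyperbolicD:
  fixes p q r x :: "'x::metric_space"
  assumes "delta_hyperbolic \<delta> TYPE('x)"
  shows "gromov_product p r x \<ge> min (gromov_product p q x) (gromov_product q r x) - \<delta>"
  using assms unfolding delta_hyperbolic_def by blast

lemma delta_hyperbolic_nonneg:
  assumes "delta_hyperbolic \<delta> TYPE('x::metric_space)"
  shows "0 \<le> \<delta>"
proof -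
  fix p :: 'x
  show ?thesis
    using delta_hyperbolicD[OF assms, of p p p p] by (simp add: gromov_product_def)
qed

definition geodesic_segment :: "(real \<Rightarrow> 'x::metric_space) \<Rightarrow> 'x \<Rightarrow> 'x \<Rightarrow> bool" where
  "geodesic_segment \<gamma> x y \<longleftrightarrow> \<gamma> 0 = x \<and> \<gamma> (dist x y) = y \<and>
     (\<forall>s\<in>{0..dist x y}. \<forall>t\<in>{0..dist x y}. dist (\<gamma> s) (\<gamma> t) = \<bar>s - t\<bar>)"

lemma geodesic_spaceE:
  fixes x y :: "'x::metric_space"
  assumes "geodesic_space TYPE('x)"
  obtains \<gamma> where "geodesic_segment \<gamma> x y"
  using assms unfolding geodesic_space_def geodesic_segment_def by blast

lemma geodesic_segment_dist:
  assumes "geodesic_segment \<gamma> x y" "s \<in> {0..dist x y}" "t \<in> {0..dist x y}"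
  shows "dist (\<gamma> s) (\<gamma> t) = \<bar>s - t\<bar>"
  using assms unfolding geodesic_segment_def by blast

lemma geodesic_segment_dist_ends:
  assumes "geodesic_segment \<gamma> x y" "s \<in> {0..dist x y}"
  shows "dist (\<gamma> s) x = s" "dist (\<gamma> s) y = dist x y - s"
proof -
  have "\<gamma> 0 = x" "\<gamma> (dist x y) = y" using assms(1) unfolding geodesic_segment_def by auto
  then show "dist (\<gamma> s) x = s" "dist (\<gamma> s) y = dist x y - s"
    using geodesic_segment_dist[OF assms(1,2), of 0] geodesic_segment_dist[OF assms(1,2), of "dist x y"]
      assms(2) by auto
qed

text \<open>The point p of [x, y] at distance (z|y)_x from x satisfies (y|p)_x = (z|y)_x, so
  hyperbolicity at x gives (z|p)_x \<ge> (z|y)_x - \<delta>, which unfolds to the claim.\<close>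
lemma dist_geodesic_segment_le_gromov_product:
  fixes z :: "'x::metric_space"
  assumes hyp: "delta_hyperbolic \<delta> TYPE('x)" and \<gamma>: "geodesic_segment \<gamma> x y"
  shows "dist z (\<gamma> (gromov_product z y x)) \<le> gromov_product x y z + 2 * \<delta>"
proof -
  define \<sigma> where "\<sigma> = gromov_product z y x"
  have \<sigma>: "\<sigma> \<in> {0..dist x y}"
    using gromov_product_nonneg gromov_product_le_dist unfolding \<sigma>_def by (metis atLeastAtMost_iff dist_commute)
  note ends = geodesic_segment_dist_ends[OF \<gamma> \<sigma>]
  have "gromov_product y (\<gamma> \<sigma>) x = \<sigma>"
    using ends unfolding gromov_product_def by (simp add: dist_commute)
  then have "gromov_product z (\<gamma> \<sigma>) x \<ge> \<sigma> - \<delta>"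
    using delta_hyperbolicD[OF hyp, where p = z and q = y and r = "\<gamma> \<sigma>" and x = x] unfolding \<sigma>_def by simp
  then show ?thesis
    using ends unfolding \<sigma>_def gromov_product_def by (simp add: dist_commute field_simps)
qed

text \<open>(x'|y')_w = 0 while (x'|x)_w > \<delta> and (y|y')_w > 2\<delta>, so hyperbolicity at w for x', x, y'
  forces (x|y')_w \<le> \<delta>, and then for x, y, y' forces (x|y)_w \<le> 2\<delta>.\<close>
lemma gromov_product_le_of_between_near_ends:
  fixes x y x' y' w :: "'x::metric_space"
  assumes hyp: "delta_hyperbolic \<delta> TYPE('x)"
    and between: "dist x' w + dist w y' = dist x' y'"
    and "dist x x' \<le> K" "dist y y' \<le> K"
    and "\<delta> + K < dist x' w" "2 * \<delta> + K < dist w y'"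
  shows "gromov_product x y w \<le> 2 * \<delta>"
proof -
  have "gromov_product x' y' w = 0"
    using between unfolding gromov_product_def by (simp add: dist_commute)
  moreover have "gromov_product x' x w \<ge> dist x' w - K"
    using assms(3) dist_triangle3[of x' w x] unfolding gromov_product_def by (simp add: dist_commute)
  moreover have "gromov_product y y' w \<ge> dist w y' - K"
    using assms(4) dist_triangle3[of y' w y] unfolding gromov_product_def by (simp add: dist_commute)
  ultimately show ?thesis
    using delta_hyperbolicD[OF hyp, where p = x' and q = x and r = y' and x = w]
      delta_hyperbolicD[OF hyp, where p = x and q = y and r = y' and x = w] assms(5,6)
    by (auto simp: min_def split: if_splits)
qed

lemma dist_geodesic_segment_projection_le:
  fixes x y x' y' w :: "'x::metric_space"
  assumes hyp: "delta_hyperbolic \<delta> TYPE('x)" and \<gamma>: "geodesic_segment \<gamma> x y"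
    and "dist x' y' = dist x y" "dist x' w = s" "dist w y' = dist x y - s"
    and "dist x x' \<le> K" "dist y y' \<le> K"
    and "\<delta> + K < s" "s < dist x y - K - 2 * \<delta>"
  shows "dist w (\<gamma> (gromov_product w y x)) \<le> 4 * \<delta>"
    and "\<bar>gromov_product w y x - s\<bar> \<le> K"
proof -
  have "gromov_product x y w \<le> 2 * \<delta>"
    using gromov_product_le_of_between_near_ends[OF hyp, of x' w y' x K y] assms(3-9) by simp
  then show "dist w (\<gamma> (gromov_product w y x)) \<le> 4 * \<delta>"
    using dist_geodesic_segment_le_gromov_product[OF hyp \<gamma>, of w] by simp
  have "\<bar>dist w x - s\<bar> \<le> K" "\<bar>dist w y - (dist x y - s)\<bar> \<le> K"
    using assms(4-7) dist_triangle3[of w x x'] dist_triangle3[of w x' x]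
      dist_triangle3[of w y y'] dist_triangle3[of w y' y]
    by (auto simp: dist_commute)
  then show "\<bar>gromov_product w y x - s\<bar> \<le> K"
    unfolding gromov_product_def by (auto simp: dist_commute abs_le_iff field_simps)
qed

lemma isometric_action_mult:
  "isometric_action G act \<Longrightarrow> g \<in> carrier G \<Longrightarrow> h \<in> carrier G \<Longrightarrow>
    act (g \<otimes>\<^bsub>G\<^esub> h) x = act g (act h x)"
  unfolding isometric_action_def by blast

lemma isometric_action_dist:
  "isometric_action G act \<Longrightarrow> g \<in> carrier G \<Longrightarrow> dist (act g x) (act g y) = dist x y"
  unfolding isometric_action_def by blast

lemma isometric_action_inv_mult_dist:
  assumes "group G" "isometric_action G act" "a \<in> carrier G" "b \<in> carrier G"
  shows "dist (act (inv\<^bsub>G\<^esub> a \<otimes>\<^bsub>G\<^esub> b) p) p = dist (act b p) (act a p)"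
proof -
  have inv: "inv\<^bsub>G\<^esub> a \<in> carrier G" using assms by simp
  have "act (inv\<^bsub>G\<^esub> a) (act a p) = p"
    using isometric_action_mult[OF assms(2) inv assms(3)] assms unfolding isometric_action_def
    by (metis group.l_inv)
  then show ?thesis
    using isometric_action_mult[OF assms(2) inv assms(4)] isometric_action_dist[OF assms(2) inv]
    by metis
qed

definition coarse_stabilizer ::
  "('g, 'b) monoid_scheme \<Rightarrow> ('g \<Rightarrow> 'x::metric_space \<Rightarrow> 'x) \<Rightarrow> real \<Rightarrow> 'x \<Rightarrow> 'x \<Rightarrow> 'g set" where
  "coarse_stabilizer G act K x y = {g \<in> carrier G. dist (act g x) x \<le> K \<and> dist (act g y) y \<le> K}"

lemma acylindricalD:
  assumes "acylindrical G act \<delta> \<kappa>0 N0" "\<kappa>0 \<le> dist x y"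
  shows "finite (coarse_stabilizer G act (100 * \<delta>) x y)"
    and "card (coarse_stabilizer G act (100 * \<delta>) x y) \<le> N0"
  using assms unfolding acylindrical_def coarse_stabilizer_def Let_def by auto

lemma card_le_of_translates_close:
  assumes "group G" "isometric_action G act" "acylindrical G act \<delta> \<kappa>0 N0" "\<kappa>0 \<le> dist p q"
    and "B \<subseteq> carrier G"
    and close: "\<And>a b. a \<in> B \<Longrightarrow> b \<in> B \<Longrightarrow>
      dist (act a p) (act b p) \<le> 100 * \<delta> \<and> dist (act a q) (act b q) \<le> 100 * \<delta>"
  shows "finite B \<and> card B \<le> N0"
proof (cases "B = {}")
  case False
  interpret G: group G by fact
  obtain a where a: "a \<in> B" using False by auto
  then have inv: "inv\<^bsub>G\<^esub> a \<in> carrier G" using assms(5) by auto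
  let ?S = "coarse_stabilizer G act (100 * \<delta>) p q"
  have inj: "inj_on (\<lambda>b. inv\<^bsub>G\<^esub> a \<otimes>\<^bsub>G\<^esub> b) B"
    using assms(5) inv by (intro inj_onI) (metis G.Units_eq G.Units_l_cancel subsetD)
  have "inv\<^bsub>G\<^esub> a \<otimes>\<^bsub>G\<^esub> b \<in> ?S" if b: "b \<in> B" for b
  proof -
    have ab: "a \<in> carrier G" "b \<in> carrier G" using a b assms(5) by auto
    then show ?thesis
      using close[OF a b] isometric_action_inv_mult_dist[OF assms(1,2) ab]
      unfolding coarse_stabilizer_def by (simp add: dist_commute)
  qed
  then have "(\<lambda>b. inv\<^bsub>G\<^esub> a \<otimes>\<^bsub>G\<^esub> b) ` B \<subseteq> ?S" by auto
  then show ?thesis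
    using acylindricalD[OF assms(3,4)] inj card_inj_on_le finite_imageD finite_subset
    by (metis order_trans)
qed simp

lemma coarse_stabilizer_geodesic_point:
  fixes x y :: "'x::metric_space"
  assumes hyp: "delta_hyperbolic \<delta> TYPE('x)" and \<gamma>: "geodesic_segment \<gamma> x y"
    and act: "isometric_action G act" and a: "a \<in> coarse_stabilizer G act K x y"
    and s: "\<delta> + K < s" "s < dist x y - K - 2 * \<delta>"
  shows "dist (act a (\<gamma> s)) (\<gamma> (gromov_product (act a (\<gamma> s)) y x)) \<le> 4 * \<delta>"
    and "\<bar>gromov_product (act a (\<gamma> s)) y x - s\<bar> \<le> K"
proof -
  have a': "a \<in> carrier G" "dist x (act a x) \<le> K" "dist y (act a y) \<le> K"
    using a unfolding coarse_stabilizer_def by (auto simp: dist_commute)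
  have "0 \<le> K" using a'(2) by (meson order_trans zero_le_dist)
  then have "s \<in> {0..dist x y}"
    using s delta_hyperbolic_nonneg[OF hyp] by auto
  then have "dist (act a x) (act a (\<gamma> s)) = s" "dist (act a (\<gamma> s)) (act a y) = dist x y - s"
    using geodesic_segment_dist_ends[OF \<gamma>] isometric_action_dist[OF act a'(1)]
    by (simp_all add: dist_commute)
  note projection = dist_geodesic_segment_projection_le[OF hyp \<gamma>
      isometric_action_dist[OF act a'(1)] this a'(2,3) s]
  show "dist (act a (\<gamma> s)) (\<gamma> (gromov_product (act a (\<gamma> s)) y x)) \<le> 4 * \<delta>"
    by (fact projection(1))
  show "\<bar>gromov_product (act a (\<gamma> s)) y x - s\<bar> \<le> K"
    by (fact projection(2))
qed

lemma abs_diff_le_of_floor_divide_eq: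
  fixes a b \<delta> :: real
  assumes "0 < \<delta>" "\<lfloor>a / \<delta>\<rfloor> = \<lfloor>b / \<delta>\<rfloor>"
  shows "\<bar>a - b\<bar> \<le> \<delta>"
proof -
  have "\<bar>a / \<delta> - b / \<delta>\<bar> \<le> 1"
    using assms(2) by linarith
  then show ?thesis
    using assms(1) by (simp add: diff_divide_distrib[symmetric] abs_divide)
qed

text \<open>(p|y)_x is the distance from x of the approximate projection of p to [x, y]; the level
  records its offset from s in units of \<delta>.\<close>
definition projection_level :: "real \<Rightarrow> real \<Rightarrow> 'x::metric_space \<Rightarrow> 'x \<Rightarrow> 'x \<Rightarrow> int" where
  "projection_level \<delta> s x y p = \<lfloor>(gromov_product p y x - s) / \<delta>\<rfloor>"

lemma projection_level_coarse_stabilizer: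
  fixes x y :: "'x::metric_space"
  assumes "0 < \<delta>" and hyp: "delta_hyperbolic \<delta> TYPE('x)" and \<gamma>: "geodesic_segment \<gamma> x y"
    and act: "isometric_action G act" and a: "a \<in> coarse_stabilizer G act K x y"
    and s: "\<delta> + K < s" "s < dist x y - K - 2 * \<delta>"
  shows "projection_level \<delta> s x y (act a (\<gamma> s)) \<in> {\<lfloor>- K / \<delta>\<rfloor>..\<lfloor>K / \<delta>\<rfloor>}"
proof -
  let ?d = "gromov_product (act a (\<gamma> s)) y x - s"
  have "\<bar>?d\<bar> \<le> K"
    using coarse_stabilizer_geodesic_point(2)[OF hyp \<gamma> act a s] .
  then have "- K \<le> ?d" "?d \<le> K" by linarith+
  then have "- K / \<delta> \<le> ?d / \<delta>" "?d / \<delta> \<le> K / \<delta>"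
    using assms(1) by (simp_all only: divide_right_mono less_imp_le)
  then show ?thesis
    unfolding projection_level_def by (auto intro: floor_mono)
qed

lemma dist_le_of_projection_level_eq:
  fixes x y :: "'x::metric_space"
  assumes "0 < \<delta>" and hyp: "delta_hyperbolic \<delta> TYPE('x)" and \<gamma>: "geodesic_segment \<gamma> x y"
    and act: "isometric_action G act"
    and ab: "a \<in> coarse_stabilizer G act K x y" "b \<in> coarse_stabilizer G act K x y"
    and s: "\<delta> + K < s" "s < dist x y - K - 2 * \<delta>"
    and level: "projection_level \<delta> s x y (act a (\<gamma> s)) = projection_level \<delta> s x y (act b (\<gamma> s))"
  shows "dist (act a (\<gamma> s)) (act b (\<gamma> s)) \<le> 9 * \<delta>"
proof -
  define ha where "ha = gromov_product (act a (\<gamma> s)) y x"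
  define hb where "hb = gromov_product (act b (\<gamma> s)) y x"
  have "\<bar>(ha - s) - (hb - s)\<bar> \<le> \<delta>"
    using abs_diff_le_of_floor_divide_eq[OF assms(1) level[unfolded projection_level_def]]
    unfolding ha_def hb_def .
  moreover have "ha \<in> {0..dist x y}" "hb \<in> {0..dist x y}"
    unfolding ha_def hb_def using gromov_product_nonneg gromov_product_le_dist
    by (metis atLeastAtMost_iff dist_commute)+
  ultimately have "dist (\<gamma> ha) (\<gamma> hb) \<le> \<delta>"
    using geodesic_segment_dist[OF \<gamma>] by simp
  moreover have "dist (act a (\<gamma> s)) (\<gamma> ha) \<le> 4 * \<delta>" "dist (act b (\<gamma> s)) (\<gamma> hb) \<le> 4 * \<delta>"
    unfolding ha_def hb_def using coarse_stabilizer_geodesic_point(1)[OF hyp \<gamma> act _ s] ab by auto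
  ultimately show ?thesis
    using dist_triangle[of "act a (\<gamma> s)" "act b (\<gamma> s)" "\<gamma> ha"]
      dist_triangle[of "\<gamma> ha" "act b (\<gamma> s)" "\<gamma> hb"]
    by (simp add: dist_commute)
qed

lemma card_floor_interval_le:
  fixes a b :: real
  assumes "a \<le> b"
  shows "real (card {\<lfloor>a\<rfloor>..\<lfloor>b\<rfloor>}) \<le> b - a + 2"
proof -
  have "real (card {\<lfloor>a\<rfloor>..\<lfloor>b\<rfloor>}) = of_int (\<lfloor>b\<rfloor> - \<lfloor>a\<rfloor> + 1)"
    using floor_mono[OF assms] by simp
  then show ?thesis by linarith
qed

lemma finite_card_le_mult_of_fibres:
  assumes "f ` A \<subseteq> R" "finite R"
    and "\<And>r. r \<in> R \<Longrightarrow> finite {a \<in> A. f a = r} \<and> card {a \<in> A. f a = r} \<le> n"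
  shows "finite A \<and> card A \<le> card R * n"
proof -
  have A: "A \<subseteq> (\<Union>r\<in>R. {a \<in> A. f a = r})" using assms(1) by auto
  have fin: "finite (\<Union>r\<in>R. {a \<in> A. f a = r})" using assms(2,3) by auto
  have "card A \<le> (\<Sum>r\<in>R. card {a \<in> A. f a = r})"
    using card_mono[OF fin A] card_UN_le[OF assms(2)] by (rule order_trans)
  also have "\<dots> \<le> card R * n"
    using sum_bounded_above[of R "\<lambda>r. card {a \<in> A. f a = r}" n] assms(3) by auto
  finally show ?thesis
    using finite_subset[OF A fin] by simp
qed

lemma card_coarse_stabilizer_le:
  fixes G :: "('g, 'b) monoid_scheme" and act :: "'g \<Rightarrow> 'x::metric_space \<Rightarrow> 'x" and x y :: 'x
  assumes "\<delta> > 0" "geodesic_space TYPE('x)" and hyp: "delta_hyperbolic \<delta> TYPE('x)"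
    and "group G" and act: "isometric_action G act" and "acylindrical G act \<delta> \<kappa>0 N0"
    and "\<kappa>0 \<ge> \<delta>" "10^4 * \<kappa>0 \<le> dist x y"
  shows "finite (coarse_stabilizer G act (2 * \<kappa>0) x y)"
    and "real (card (coarse_stabilizer G act (2 * \<kappa>0) x y)) \<le> 36 * real N0 * \<kappa>0^2 / \<delta>^2"
proof -
  define K where "K = 2 * \<kappa>0"
  define A where "A = coarse_stabilizer G act K x y"
  obtain \<gamma> where \<gamma>: "geodesic_segment \<gamma> x y" using geodesic_spaceE[OF assms(2)] .
  define s1 where "s1 = dist x y / 2"
  define s2 where "s2 = dist x y / 2 + \<kappa>0"
  have s1: "\<delta> + K < s1" "s1 < dist x y - K - 2 * \<delta>"
    and s2: "\<delta> + K < s2" "s2 < dist x y - K - 2 * \<delta>"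
    using assms(1,7,8) unfolding K_def s1_def s2_def by auto
  define level where "level s a = projection_level \<delta> s x y (act a (\<gamma> s))" for s a
  define R where "R = {\<lfloor>- K / \<delta>\<rfloor>..\<lfloor>K / \<delta>\<rfloor>}"
  have same_level_close: "dist (act a (\<gamma> s)) (act b (\<gamma> s)) \<le> 100 * \<delta>"
    if "a \<in> A" "b \<in> A" "\<delta> + K < s" "s < dist x y - K - 2 * \<delta>" "level s a = level s b" for s a b
    using dist_le_of_projection_level_eq[OF assms(1) hyp \<gamma> act, of a K b s] that assms(1)
    unfolding A_def level_def by simp
  have "\<kappa>0 \<le> dist (\<gamma> s1) (\<gamma> s2)"
    using geodesic_segment_dist[OF \<gamma>, of s1 s2] s1 s2 assms(1,7) unfolding s1_def s2_def K_def by simp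
  then have "finite {a \<in> A. (level s1 a, level s2 a) = r} \<and> card {a \<in> A. (level s1 a, level s2 a) = r} \<le> N0"
    for r
  proof (rule card_le_of_translates_close[OF assms(4) act assms(6)])
    show "{a \<in> A. (level s1 a, level s2 a) = r} \<subseteq> carrier G"
      unfolding A_def coarse_stabilizer_def by auto
    fix a b assume "a \<in> {a \<in> A. (level s1 a, level s2 a) = r}" "b \<in> {a \<in> A. (level s1 a, level s2 a) = r}"
    then show "dist (act a (\<gamma> s1)) (act b (\<gamma> s1)) \<le> 100 * \<delta> \<and>
        dist (act a (\<gamma> s2)) (act b (\<gamma> s2)) \<le> 100 * \<delta>"
      using same_level_close[OF _ _ s1] same_level_close[OF _ _ s2] by auto
  qed
  moreover have "(\<lambda>a. (level s1 a, level s2 a)) ` A \<subseteq> R \<times> R"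
    using projection_level_coarse_stabilizer[OF assms(1) hyp \<gamma> act] s1 s2
    unfolding A_def R_def level_def by blast
  ultimately have A: "finite A \<and> card A \<le> card (R \<times> R) * N0"
    by (intro finite_card_le_mult_of_fibres) (auto simp: R_def)
  then show "finite (coarse_stabilizer G act (2 * \<kappa>0) x y)"
    unfolding A_def K_def by simp
  have "real (card R) \<le> K / \<delta> - (- K / \<delta>) + 2"
    unfolding R_def using assms(1,7) K_def by (intro card_floor_interval_le) (simp add: divide_right_mono)
  also have "\<dots> \<le> 6 * \<kappa>0 / \<delta>"
    using assms(1,7) unfolding K_def by (simp add: field_simps)
  finally have card_R: "real (card R) \<le> 6 * \<kappa>0 / \<delta>" .
  have "real (card A) \<le> real (card R) ^ 2 * real N0"
    using A by (simp add: card_cartesian_product power2_eq_square flip: of_nat_mult)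
  also have "\<dots> \<le> (6 * \<kappa>0 / \<delta>) ^ 2 * real N0"
    using card_R by (intro mult_right_mono power_mono) auto
  also have "\<dots> = 36 * real N0 * \<kappa>0^2 / \<delta>^2"
    by (simp add: power_divide power_mult_distrib)
  finally show "real (card (coarse_stabilizer G act (2 * \<kappa>0) x y)) \<le> 36 * real N0 * \<kappa>0^2 / \<delta>^2"
    unfolding A_def K_def .
qed

lemma inv_mult_in_coarse_stabilizer:
  assumes "group G" and act: "isometric_action G act"
    and carrier: "u \<in> carrier G" "w \<in> carrier G" "u' \<in> carrier G" "w' \<in> carrier G" "v \<in> carrier G"
    and small: "dist (act u x) x \<le> \<kappa>" "dist (act w x) x \<le> \<kappa>" "dist (act u' x) x \<le> \<kappa>" "dist (act w' x) x \<le> \<kappa>"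
    and eq: "u \<otimes>\<^bsub>G\<^esub> v \<otimes>\<^bsub>G\<^esub> w = u' \<otimes>\<^bsub>G\<^esub> v \<otimes>\<^bsub>G\<^esub> w'"
  shows "inv\<^bsub>G\<^esub> u' \<otimes>\<^bsub>G\<^esub> u \<in> coarse_stabilizer G act (2 * \<kappa>) x (act v x)"
proof -
  interpret G: group G by fact
  let ?g = "u \<otimes>\<^bsub>G\<^esub> v \<otimes>\<^bsub>G\<^esub> w"
  have near_g: "dist (act a (act v x)) (act ?g x) \<le> \<kappa>"
    if "a \<in> carrier G" "b \<in> carrier G" "?g = a \<otimes>\<^bsub>G\<^esub> v \<otimes>\<^bsub>G\<^esub> b" "dist (act b x) x \<le> \<kappa>" for a b
  proof -
    have "act ?g x = act a (act v (act b x))"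
      unfolding that(3) using that(1,2) carrier(5) by (simp add: isometric_action_mult[OF act])
    then show ?thesis
      using that(1,4) carrier(5) by (simp add: isometric_action_dist[OF act] dist_commute)
  qed
  have "dist (act u (act v x)) (act ?g x) \<le> \<kappa>" "dist (act u' (act v x)) (act ?g x) \<le> \<kappa>"
    using near_g[of u w] near_g[of u' w'] carrier small eq by simp_all
  then have "dist (act u (act v x)) (act u' (act v x)) \<le> 2 * \<kappa>"
    using dist_triangle[of "act u (act v x)" "act u' (act v x)" "act ?g x"]
      dist_commute[of "act ?g x" "act u' (act v x)"] by linarith
  moreover have "dist (act u x) (act u' x) \<le> 2 * \<kappa>"
    using small(1,3) dist_triangle[of "act u x" "act u' x" x] dist_commute[of x "act u' x"] by linarith
  ultimately show ?thesis
    using carrier isometric_action_inv_mult_dist[OF assms(1) act carrier(3,1)]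
    unfolding coarse_stabilizer_def by simp
qed

lemma card_square_le_card_double_coset_prod:
  assumes "group G" "U \<subseteq> carrier G" "finite U" "v \<in> carrier G" "finite B"
    and inv_mult: "\<And>u w u' w'. u \<in> U \<Longrightarrow> w \<in> U \<Longrightarrow> u' \<in> U \<Longrightarrow> w' \<in> U \<Longrightarrow>
      u \<otimes>\<^bsub>G\<^esub> v \<otimes>\<^bsub>G\<^esub> w = u' \<otimes>\<^bsub>G\<^esub> v \<otimes>\<^bsub>G\<^esub> w' \<Longrightarrow> inv\<^bsub>G\<^esub> u' \<otimes>\<^bsub>G\<^esub> u \<in> B"
  shows "card U ^ 2 \<le> card (double_coset_prod G U v) * card B"
proof -
  interpret G: group G by fact
  define m where "m p = fst p \<otimes>\<^bsub>G\<^esub> v \<otimes>\<^bsub>G\<^esub> snd p" for p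
  have D: "m ` (U \<times> U) = double_coset_prod G U v"
    unfolding m_def double_coset_prod_def by force
  have "card {p \<in> U \<times> U. m p = g} \<le> card B" for g
  proof (cases "{p \<in> U \<times> U. m p = g} = {}")
    case False
    then obtain u' w' where p': "(u', w') \<in> U \<times> U" "m (u', w') = g" by auto
    have "inj_on (\<lambda>p. inv\<^bsub>G\<^esub> u' \<otimes>\<^bsub>G\<^esub> fst p) {p \<in> U \<times> U. m p = g}"
    proof (rule inj_onI)
      fix p q assume p: "p \<in> {p \<in> U \<times> U. m p = g}" and q: "q \<in> {p \<in> U \<times> U. m p = g}"
        and "inv\<^bsub>G\<^esub> u' \<otimes>\<^bsub>G\<^esub> fst p = inv\<^bsub>G\<^esub> u' \<otimes>\<^bsub>G\<^esub> fst q"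
      then have fst: "fst p = fst q"
        using p' assms(2) by (auto simp: subset_iff)
      then have "snd p = snd q"
        using p q assms(2,4) unfolding m_def by (auto simp: subset_iff G.m_assoc)
      then show "p = q" using fst by (simp add: prod_eq_iff)
    qed
    moreover have "(\<lambda>p. inv\<^bsub>G\<^esub> u' \<otimes>\<^bsub>G\<^esub> fst p) ` {p \<in> U \<times> U. m p = g} \<subseteq> B"
      using inv_mult p' unfolding m_def by auto
    ultimately show ?thesis
      using card_inj_on_le assms(5) by blast
  qed (simp only: card.empty le0)
  moreover have "finite (double_coset_prod G U v)"
    unfolding D[symmetric] using assms(3) by simp
  ultimately have "finite (U \<times> U) \<and> card (U \<times> U) \<le> card (double_coset_prod G U v) * card B"
    using assms(3) by (intro finite_card_le_mult_of_fibres) (auto simp flip: D)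
  then show ?thesis
    by (simp add: card_cartesian_product power2_eq_square)
qed

theorem lemma5p1:
  fixes G :: "('g, 'b) monoid_scheme" and act :: "'g \<Rightarrow> 'x::metric_space \<Rightarrow> 'x"
    and \<delta> \<kappa>0 :: real and N0 :: nat and U :: "'g set" and x0 :: 'x and v :: 'g
  assumes "\<delta> > 0"
    and "geodesic_space TYPE('x)"
    and "delta_hyperbolic \<delta> TYPE('x)"
    and "group G"
    and "isometric_action G act"
    and "acylindrical G act \<delta> \<kappa>0 N0"
    and "\<kappa>0 \<ge> \<delta>"
    and "U \<subseteq> carrier G" and "finite U"
    and "mean_disp act U x0 \<le> energy act U + \<delta>"
    and "v \<in> carrier G"
    and "dist (act v x0) x0 \<ge> 10^4 * \<kappa>0"
  shows "let \<rho>0 = \<delta> / real N0; c = (1 / 10^6) * (\<rho>0 / \<kappa>0);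
             U1 = {u \<in> U. dist (act u x0) x0 \<le> \<kappa>0}
         in real (card (double_coset_prod G U1 v)) \<ge> c^2 * real (card U1)^2"
proof -
  define c where "c = (1 / 10^6) * ((\<delta> / real N0) / \<kappa>0)"
  define U1 where "U1 = {u \<in> U. dist (act u x0) x0 \<le> \<kappa>0}"
  define A where "A = coarse_stabilizer G act (2 * \<kappa>0) x0 (act v x0)"
  have "10^4 * \<kappa>0 \<le> dist x0 (act v x0)"
    using assms(12) by (simp add: dist_commute)
  note card_A = card_coarse_stabilizer_le[OF assms(1-7) this, folded A_def]
  have "card U1 ^ 2 \<le> card (double_coset_prod G U1 v) * card A"
    using assms(4,8,9,11) card_A(1) unfolding U1_def A_def
    by (intro card_square_le_card_double_coset_prod inv_mult_in_coarse_stabilizer[OF assms(4,5)]) auto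
  then have "real (card U1)^2 \<le> real (card (double_coset_prod G U1 v)) * real (card A)"
    by (simp flip: of_nat_mult of_nat_power)
  then have "c^2 * real (card U1)^2 \<le> c^2 * (real (card (double_coset_prod G U1 v)) * real (card A))"
    by (rule mult_left_mono) simp
  also have "\<dots> = real (card (double_coset_prod G U1 v)) * (c^2 * real (card A))"
    by simp
  also have "\<dots> \<le> real (card (double_coset_prod G U1 v)) * 1"
  proof (intro mult_left_mono)
    have "N0 \<ge> 1" using assms(6) unfolding acylindrical_def by simp
    then have "c^2 * (36 * real N0 * \<kappa>0^2 / \<delta>^2) \<le> 1"
      unfolding c_def using assms(1,7) by (simp add: field_simps power2_eq_square)
    then show "c^2 * real (card A) \<le> 1"
      using card_A(2) by (meson mult_left_mono order_trans zero_le_power2)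
  qed simp
  finally show ?thesis
    unfolding Let_def c_def[symmetric] U1_def[symmetric] by simp
qed

end
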